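(* Let $S$ be a rectangular domain, $\bar\eta$ a flow field on $\mathbb{E}(\bar S)$, and $\ell,\ell'\subseteq\bar S$ broken traces with $w_\eta(\ell)>0$ and $w_\eta(\ell')>0$. Then $\ell\succeq\ell'$ or $\ell'\succeq\ell$.
   Context: Lattice and edges. $\tilde{\mathbb{Z}}^2=\{(t,x)\in\mathbb{Z}^2:t+x\text{ even}\}$; edges $\langle y,y'\rangle$ join points at distance $\sqrt2$. For $y=(t,x)$: - $e^\nearrow_y=\langle(t,x),(t+1,x+1)\rangle$, - $e^\searrow_y=\langle(t,x),(t+1,x-1)\rangle$, - $e^\swarrow_y=\langle(t-1,x-1),(t,x)\rangle$, - $e^\nwarrow_y=\langle(t-1,x+1),(t,x)\rangle$. Domains. A rectangular domain is a nonempty set $S=\{(t,x)\in\tilde{\mathbb{Z}}^2: a\le t+x\le b,\ c\le t-x\le d\}$ with even integers $a\le b$, $c\le d$. $\bar S$ is $S$ together with all points joined by an edge to a point of $S$; $\partial\bar S=\bar S\setminus S$; $\mathbb{E}(\bar S)$ is the set of edges with at least one endpoint in $S$. Flow field. A flow field is $\eta(e)\ge0$, $e\in\mathbb{E}(\bar S)$, with $\eta(e^\nwarrow_y)+\eta(e^\nearrow_y)=\eta(e^\swarrow_y)+\eta(e^\searrow_y)$ for all $y\in S$; its birth field is $\xi_y=\eta(e^\nearrow_y)\wedge\eta(e^\searrow_y)$. Association. For $y\in S$, a lower edge $f_1\in\{e^\swarrow_y,e^\searrow_y\}$ with $p_1\in(0,\eta(f_1)]$, and an upper edge $f_2\in\{e^\nwarrow_y,e^\nearrow_y\}$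 with $p_2\in(0,\eta(f_2)]$, write $(f_1,p_1)\sim_y(f_2,p_2)$ exactly when: - Case 1: $f_1=e^\swarrow_y$, $f_2=e^\nwarrow_y$, $p_1\le\eta(f_1)\wedge\eta(f_2)$, $p_2=p_1$; - Case 2: $f_1=e^\searrow_y$, $f_2=e^\nwarrow_y$, $p_2>\eta(e^\swarrow_y)$, $p_1=p_2-\eta(e^\swarrow_y)$; - Case 3: $f_1=e^\swarrow_y$, $f_2=e^\nearrow_y$, $p_1>\eta(e^\nwarrow_y)$, $p_2=p_1-\eta(e^\nwarrow_y)$; - Case 4: $f_1=e^\searrow_y$, $f_2=e^\nearrow_y$, $p_i>\eta(f_i)-\xi_y$ ($i=1,2$), $\eta(f_1)-p_1=\eta(f_2)-p_2$. Broken traces. A broken trace is $\ell=(y_0,e_1,y_1,\dots,e_n,y_n)$, $n\ge1$, with $y_i=(t_i,x_i)\in\tilde{\mathbb{Z}}^2$, $e_i=\langle y_{i-1},y_i\rangle$, $x_i=x_{i-1}+1$, $t_i-t_{i-1}\in\{-1,1\}$. - $D(\ell)=\{x_0,\dots,x_n\}$, and $t_\ell(x)$ is the $t$-coordinate of the vertex of $\ell$ at second coordinate $x$. - $\ell\subseteq\bar S$ means $y_0,y_n\in\bar S$, $y_1,\dots,y_{n-1}\in S$, all $e_i\in\mathbb{E}(\bar S)$. Weight. $w_\eta(\ell)$ is the Lebesgue measure of the set of $p_1\in(0,\eta(e_1)]$ for which there exist $p_i\in(0,\eta(e_i)]$ ($i=2,\dots,n$) with $(e_{i-1},p_{i-1})\sim_{y_{i-1}}(e_i,p_i)$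 for all $i=2,\dots,n$. Order. $\ell\succeq\ell'$ means that $t_\ell(x)\ge t_{\ell'}(x)$ for all $x\in D(\ell)\cap D(\ell')$, and that $t_\ell(x)\ge t_{\ell'}(x')$ for some $x\in D(\ell)$, $x'\in D(\ell')$. *)

theory Defs
  imports "HOL-Analysis.Analysis"
begin

type_synonym pt = "int \<times> int"   (* (t, x) *)
type_synonym edge = "pt set"

definition lattice :: "pt set" where
  "lattice = {(t, x). even (t + x)}"

definition adjacent :: "pt \<Rightarrow> pt \<Rightarrow> bool" where
  "adjacent y y' \<longleftrightarrow> y \<in> lattice \<and> y' \<in> lattice \<and>
     \<bar>fst y - fst y'\<bar> = 1 \<and> \<bar>snd y - snd y'\<bar> = 1"

definition e_ne :: "pt \<Rightarrow> edge" where "e_ne y = {(fst y, snd y), (fst y + 1, snd y + 1)}"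
definition e_se :: "pt \<Rightarrow> edge" where "e_se y = {(fst y, snd y), (fst y + 1, snd y - 1)}"
definition e_sw :: "pt \<Rightarrow> edge" where "e_sw y = {(fst y - 1, snd y - 1), (fst y, snd y)}"
definition e_nw :: "pt \<Rightarrow> edge" where "e_nw y = {(fst y - 1, snd y + 1), (fst y, snd y)}"

definition rect :: "int \<Rightarrow> int \<Rightarrow> int \<Rightarrow> int \<Rightarrow> pt set" where
  "rect a b c d = {(t, x). even (t + x) \<and> a \<le> t + x \<and> t + x \<le> b \<and> c \<le> t - x \<and> t - x \<le> d}"

definition closure_dom :: "pt set \<Rightarrow> pt set" where
  "closure_dom S = S \<union> {y'. \<exists>y\<in>S. adjacent y y'}"

definition edges_of :: "pt set \<Rightarrow> edge set" where
  "edges_of S = {e. \<exists>y y'. e = {y, y'} \<and> adjacent y y' \<and> (y \<in> S \<or> y' \<in> S)}"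

definition flow_field :: "pt set \<Rightarrow> (edge \<Rightarrow> real) \<Rightarrow> bool" where
  "flow_field S \<eta> \<longleftrightarrow> (\<forall>e\<in>edges_of S. 0 \<le> \<eta> e) \<and>
     (\<forall>y\<in>S. \<eta> (e_nw y) + \<eta> (e_ne y) = \<eta> (e_sw y) + \<eta> (e_se y))"

definition birth :: "(edge \<Rightarrow> real) \<Rightarrow> pt \<Rightarrow> real" where
  "birth \<eta> y = min (\<eta> (e_ne y)) (\<eta> (e_se y))"

definition assoc :: "(edge \<Rightarrow> real) \<Rightarrow> pt \<Rightarrow> edge \<Rightarrow> real \<Rightarrow> edge \<Rightarrow> real \<Rightarrow> bool" where
  "assoc \<eta> y f1 p1 f2 p2 \<longleftrightarrow>
     f1 \<in> {e_sw y, e_se y} \<and> 0 < p1 \<and> p1 \<le> \<eta> f1 \<and>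
     f2 \<in> {e_nw y, e_ne y} \<and> 0 < p2 \<and> p2 \<le> \<eta> f2 \<and>
     ((f1 = e_sw y \<and> f2 = e_nw y \<and> p1 \<le> min (\<eta> f1) (\<eta> f2) \<and> p2 = p1) \<or>
      (f1 = e_se y \<and> f2 = e_nw y \<and> p2 > \<eta> (e_sw y) \<and> p1 = p2 - \<eta> (e_sw y)) \<or>
      (f1 = e_sw y \<and> f2 = e_ne y \<and> p1 > \<eta> (e_nw y) \<and> p2 = p1 - \<eta> (e_nw y)) \<or>
      (f1 = e_se y \<and> f2 = e_ne y \<and> p1 > \<eta> f1 - birth \<eta> y \<and> p2 > \<eta> f2 - birth \<eta> y \<and>
         \<eta> f1 - p1 = \<eta> f2 - p2))"

text \<open>A broken trace is the list of its vertices y_0, ..., y_n (n >= 1);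
  its edges are e_i = {y_(i-1), y_i}.\<close>
definition broken_trace :: "pt list \<Rightarrow> bool" where
  "broken_trace l \<longleftrightarrow> 2 \<le> length l \<and> set l \<subseteq> lattice \<and>
     (\<forall>i. i + 1 < length l \<longrightarrow> snd (l ! (i + 1)) = snd (l ! i) + 1 \<and>
                               \<bar>fst (l ! (i + 1)) - fst (l ! i)\<bar> = 1)"

definition tr_edge :: "pt list \<Rightarrow> nat \<Rightarrow> edge" where
  "tr_edge l i = {l ! (i - 1), l ! i}"

definition trace_in :: "pt list \<Rightarrow> pt set \<Rightarrow> bool" where
  "trace_in l S \<longleftrightarrow> hd l \<in> closure_dom S \<and> last l \<in> closure_dom S \<and>
     (\<forall>i. 0 < i \<and> i < length l - 1 \<longrightarrow> l ! i \<in> S) \<and>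
     (\<forall>i\<in>{1..length l - 1}. tr_edge l i \<in> edges_of S)"

definition weight :: "(edge \<Rightarrow> real) \<Rightarrow> pt list \<Rightarrow> real" where
  "weight \<eta> l = measure lebesgue
     {q. 0 < q \<and> q \<le> \<eta> (tr_edge l 1) \<and>
         (\<exists>p :: nat \<Rightarrow> real. p 1 = q \<and>
            (\<forall>i\<in>{2..length l - 1}. 0 < p i \<and> p i \<le> \<eta> (tr_edge l i) \<and>
               assoc \<eta> (l ! (i - 1)) (tr_edge l (i - 1)) (p (i - 1)) (tr_edge l i) (p i)))}"

definition dom_tr :: "pt list \<Rightarrow> int set" where
  "dom_tr l = snd ` set l"

definition t_at :: "pt list \<Rightarrow> int \<Rightarrow> int" where
  "t_at l x = fst (l ! nat (x - snd (hd l)))"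

definition trace_ge :: "pt list \<Rightarrow> pt list \<Rightarrow> bool" where
  "trace_ge l l' \<longleftrightarrow> (\<forall>x\<in>dom_tr l \<inter> dom_tr l'. t_at l x \<ge> t_at l' x) \<and>
     (\<exists>x\<in>dom_tr l. \<exists>x'\<in>dom_tr l'. t_at l x \<ge> t_at l' x')"

end

theory Submission
  imports Defs
begin

(*
  Every vertex y of the domain carries a "left" coordinate for
  the mass entering through its two lower edges (first e_sw, then e_se) and a
  "right" coordinate for the mass leaving through its two upper edges (first
  e_nw, then e_ne).  Conservation of flow makes both coordinates range over
  the same interval, and the association relation is exactly the statement
  that a point keeps its coordinate while passing through y (assoc_keeps_position).

  A broken trace of positive weight admits at least one choice of points
  p_1, p_2, ... on its edges that are successively associated; reading the
  trace as the graph of a function x |-> t(x) we call this data a strand.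
  Two strands that are strictly ordered one way at x1 and the other way at
  x2 must meet along a segment [u, v], entering it from below (e_sw) resp.
  from above (e_se) and leaving it through e_ne resp. e_nw (discrete lemma
  first_crossing).  Coordinates along the shared segment preserve their
  order, so the strand entering through e_sw has the smaller coordinate on
  exit -- yet it leaves through e_ne, whose coordinates are the larger ones.
  Hence two strands never cross (strands_do_not_cross), and the theorem
  follows because two traces comparable in neither order do cross.
*)

section \<open>Coordinates of flow at a vertex\<close>

definition conserves :: "(edge \<Rightarrow> real) \<Rightarrow> pt \<Rightarrow> bool" where
  "conserves \<eta> y \<longleftrightarrow> \<eta> (e_nw y) + \<eta> (e_ne y) = \<eta> (e_sw y) + \<eta> (e_se y)"

definition in_pos :: "(edge \<Rightarrow> real) \<Rightarrow> pt \<Rightarrow> edge \<Rightarrow> real \<Rightarrow> real" where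
  "in_pos \<eta> y f p = (if f = e_sw y then p else \<eta> (e_sw y) + p)"

definition out_pos :: "(edge \<Rightarrow> real) \<Rightarrow> pt \<Rightarrow> edge \<Rightarrow> real \<Rightarrow> real" where
  "out_pos \<eta> y f p = (if f = e_nw y then p else \<eta> (e_nw y) + p)"

lemma e_sw_neq_e_se: "e_sw y \<noteq> e_se y"
  by (cases y) (auto simp: e_sw_def e_se_def doubleton_eq_iff)

lemma e_nw_neq_e_ne: "e_nw y \<noteq> e_ne y"
  by (cases y) (auto simp: e_nw_def e_ne_def doubleton_eq_iff)

text \<open>Association means: same coordinate on both sides of the vertex
  (case 4 of the association needs conservation of flow at y).\<close>
lemma assoc_keeps_position:
  assumes "conserves \<eta> y" "assoc \<eta> y f1 p1 f2 p2"
  shows "in_pos \<eta> y f1 p1 = out_pos \<eta> y f2 p2"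
  using assms e_sw_neq_e_se[of y] e_nw_neq_e_ne[of y]
  unfolding assoc_def in_pos_def out_pos_def conserves_def by auto

lemma in_pos_sw_below_se:
  assumes "p \<le> \<eta> (e_sw y)" "0 < q"
  shows "in_pos \<eta> y (e_sw y) p < in_pos \<eta> y (e_se y) q"
  using assms e_sw_neq_e_se[of y] unfolding in_pos_def by auto

lemma out_pos_nw_below_ne:
  assumes "p \<le> \<eta> (e_nw y)" "0 < q"
  shows "out_pos \<eta> y (e_nw y) p < out_pos \<eta> y (e_ne y) q"
  using assms e_nw_neq_e_ne[of y] unfolding out_pos_def by auto

section \<open>Strands\<close>

definition graph_edge :: "(int \<Rightarrow> int) \<Rightarrow> int \<Rightarrow> edge" where
  "graph_edge T x = {(T (x - 1), x - 1), (T x, x)}"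

definition strand :: "(edge \<Rightarrow> real) \<Rightarrow> (int \<Rightarrow> int) \<Rightarrow> (int \<Rightarrow> real) \<Rightarrow> int \<Rightarrow> int \<Rightarrow> bool" where
  "strand \<eta> T P lo hi \<longleftrightarrow>
     (\<forall>x. lo \<le> x \<and> x < hi \<longrightarrow> \<bar>T (x + 1) - T x\<bar> = 1) \<and>
     (\<forall>x. lo \<le> x \<and> x \<le> hi \<longrightarrow> even (T x + x)) \<and>
     (\<forall>x. lo < x \<and> x < hi \<longrightarrow> conserves \<eta> (T x, x) \<and>
        assoc \<eta> (T x, x) (graph_edge T x) (P x) (graph_edge T (x + 1)) (P (x + 1)))"

lemma strand_restrict:
  "strand \<eta> T P lo hi \<Longrightarrow> lo \<le> lo' \<Longrightarrow> hi' \<le> hi \<Longrightarrow> strand \<eta> T P lo' hi'"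
  unfolding strand_def by auto

lemma first_crossing:
  fixes D :: "int \<Rightarrow> int"
  assumes "x1 < x2" "D x1 < 0" "0 < D x2"
    and even: "\<And>x. x1 \<le> x \<Longrightarrow> x \<le> x2 \<Longrightarrow> even (D x)"
    and jump: "\<And>x. x1 \<le> x \<Longrightarrow> x < x2 \<Longrightarrow> \<bar>D (x + 1) - D x\<bar> \<le> 2"
  obtains u v where "x1 < u" "u \<le> v" "v < x2" "D (u - 1) = -2" "D (v + 1) = 2"
    "\<And>x. u \<le> x \<Longrightarrow> x \<le> v \<Longrightarrow> D x = 0"
proof -
  \<comment> \<open>v' is the first column where D is positive, u' the last one before it
    where D is negative; since D is even and jumps by at most 2, they are
    separated by a zero segment.\<close>
  define pos where "pos = {x \<in> {x1..x2}. 0 < D x}"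
  have "finite pos" by (rule finite_subset[of _ "{x1..x2}"]) (auto simp: pos_def)
  have "x2 \<in> pos" using assms(1,3) unfolding pos_def by auto
  define v' where "v' = Min pos"
  have v': "v' \<in> pos" "\<And>x. x \<in> pos \<Longrightarrow> v' \<le> x"
    using \<open>finite pos\<close> \<open>x2 \<in> pos\<close> Min_in Min_le unfolding v'_def by blast+
  define neg where "neg = {x \<in> {x1..v'}. D x < 0}"
  have "finite neg" by (rule finite_subset[of _ "{x1..v'}"]) (auto simp: neg_def)
  have "x1 \<in> neg" using assms(2) v' unfolding neg_def pos_def by auto
  define u' where "u' = Max neg"
  have u': "u' \<in> neg" "\<And>x. x \<in> neg \<Longrightarrow> x \<le> u'"
    using \<open>finite neg\<close> \<open>x1 \<in> neg\<close> Max_in Max_ge unfolding u'_def by blast+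
  have range: "x1 \<le> u'" "u' < v'" "v' \<le> x2" using u' v' unfolding neg_def pos_def by force+
  have zero: "D x = 0" if "u' < x" "x < v'" for x
    using v'(2)[of x] u'(2)[of x] that range unfolding pos_def neg_def by force
  have "D u' \<le> -2" "2 \<le> D v'"
    using u' v' even[of u'] even[of v'] range unfolding pos_def neg_def by auto
  then have "u' + 1 < v'" using jump[of u'] range by (cases "u' + 1 = v'") auto
  then have "D (u' + 1) = 0" "D (v' - 1) = 0" using zero by auto
  then have "D u' = -2" "D v' = 2"
    using jump[of u'] jump[of "v' - 1"] \<open>D u' \<le> -2\<close> \<open>2 \<le> D v'\<close> range by auto
  then show ?thesis
    using that[of "u' + 1" "v' - 1"] zero range \<open>u' + 1 < v'\<close> by auto
qed

lemma order_along_shared_segment: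
  assumes S: "strand \<eta> T P (u - 1) (v + 1)" and S': "strand \<eta> T' P' (u - 1) (v + 1)"
    and "u \<le> v" and shared: "\<And>x. u \<le> x \<Longrightarrow> x \<le> v \<Longrightarrow> T x = T' x"
    and entry: "in_pos \<eta> (T u, u) (graph_edge T u) (P u)
                < in_pos \<eta> (T u, u) (graph_edge T' u) (P' u)"
  shows "out_pos \<eta> (T v, v) (graph_edge T (v + 1)) (P (v + 1))
         < out_pos \<eta> (T v, v) (graph_edge T' (v + 1)) (P' (v + 1))"
proof -
  have positions: "in_pos \<eta> (T x, x) (graph_edge T x) (P x)
        = out_pos \<eta> (T x, x) (graph_edge T (x + 1)) (P (x + 1)) \<and>
       in_pos \<eta> (T x, x) (graph_edge T' x) (P' x)
        = out_pos \<eta> (T x, x) (graph_edge T' (x + 1)) (P' (x + 1))"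
    if "u \<le> x" "x \<le> v" for x
  proof -
    have "u - 1 < x \<and> x < v + 1" using that by auto
    then have "conserves \<eta> (T x, x) \<and>
        assoc \<eta> (T x, x) (graph_edge T x) (P x) (graph_edge T (x + 1)) (P (x + 1))"
      "conserves \<eta> (T' x, x) \<and>
        assoc \<eta> (T' x, x) (graph_edge T' x) (P' x) (graph_edge T' (x + 1)) (P' (x + 1))"
      using S S' unfolding strand_def by blast+
    then show ?thesis
      using assoc_keeps_position[of \<eta> "(T x, x)"] assoc_keeps_position[of \<eta> "(T' x, x)"]
        shared[OF that] by simp
  qed
  have "x \<le> v \<longrightarrow> out_pos \<eta> (T x, x) (graph_edge T (x + 1)) (P (x + 1))
                 < out_pos \<eta> (T x, x) (graph_edge T' (x + 1)) (P' (x + 1))"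
    if "u \<le> x" for x
    using that
  proof (induction x rule: int_ge_induct)
    case base
    then show ?case using entry positions[of u] by auto
  next
    case (step x)
    show ?case
    proof
      assume "x + 1 \<le> v"
      then have same_edge: "graph_edge T (x + 1) = graph_edge T' (x + 1)"
        using shared[of x] shared[of "x + 1"] step unfolding graph_edge_def by auto
      have "P (x + 1) < P' (x + 1)"
        using step \<open>x + 1 \<le> v\<close> same_edge unfolding out_pos_def by (auto split: if_splits)
      then have "in_pos \<eta> (T (x + 1), x + 1) (graph_edge T (x + 1)) (P (x + 1))
                 < in_pos \<eta> (T (x + 1), x + 1) (graph_edge T' (x + 1)) (P' (x + 1))"
        using same_edge unfolding in_pos_def by auto
      then show "out_pos \<eta> (T (x + 1), x + 1) (graph_edge T (x + 1 + 1)) (P (x + 1 + 1))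
                 < out_pos \<eta> (T (x + 1), x + 1) (graph_edge T' (x + 1 + 1)) (P' (x + 1 + 1))"
        using positions[of "x + 1"] shared[of "x + 1"] step \<open>x + 1 \<le> v\<close> by simp
    qed
  qed
  then show ?thesis using \<open>u \<le> v\<close> by auto
qed

lemma strands_do_not_cross:
  assumes S: "strand \<eta> T P x1 x2" and S': "strand \<eta> T' P' x1 x2"
    and "x1 < x2" "T x1 < T' x1" "T' x2 < T x2"
  shows False
proof -
  have step: "\<bar>T (x + 1) - T x\<bar> = 1" "\<bar>T' (x + 1) - T' x\<bar> = 1"
    if "x1 \<le> x" "x < x2" for x
    using S S' that unfolding strand_def by auto
  define D where "D x = T x - T' x" for x
  have "even (D x)" if "x1 \<le> x" "x \<le> x2" for x
  proof -
    have "even ((T x + x) - (T' x + x))" using S S' that unfolding strand_def by auto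
    then show ?thesis unfolding D_def by simp
  qed
  moreover have "\<bar>D (x + 1) - D x\<bar> \<le> 2" if "x1 \<le> x" "x < x2" for x
    using step[OF that] unfolding D_def by arith
  moreover have "D x1 < 0" "0 < D x2" using assms(4,5) unfolding D_def by auto
  ultimately obtain u v where uv: "x1 < u" "u \<le> v" "v < x2"
    and below: "D (u - 1) = -2" and above: "D (v + 1) = 2"
    and zero: "\<And>x. u \<le> x \<Longrightarrow> x \<le> v \<Longrightarrow> D x = 0"
    using first_crossing[of x1 x2 D] assms(3) by blast
  have shared: "T x = T' x" if "u \<le> x" "x \<le> v" for x
    using zero[OF that] unfolding D_def by simp
  have "\<bar>T u - T (u - 1)\<bar> = 1" "\<bar>T' u - T' (u - 1)\<bar> = 1"
    using step[of "u - 1"] uv by simp_all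
  then have "T (u - 1) = T u - 1" "T' (u - 1) = T u + 1"
    using below shared[OF order_refl uv(2)] unfolding D_def by arith+
  then have edges_u: "graph_edge T u = e_sw (T u, u)" "graph_edge T' u = e_se (T u, u)"
    using shared[of u] uv unfolding graph_edge_def e_sw_def e_se_def by auto
  have "\<bar>T (v + 1) - T v\<bar> = 1" "\<bar>T' (v + 1) - T' v\<bar> = 1"
    using step[of v] uv by simp_all
  then have "T (v + 1) = T v + 1" "T' (v + 1) = T v - 1"
    using above shared[OF uv(2) order_refl] unfolding D_def by arith+
  then have edges_v: "graph_edge T (v + 1) = e_ne (T v, v)" "graph_edge T' (v + 1) = e_nw (T v, v)"
    using shared[of v] uv unfolding graph_edge_def e_ne_def e_nw_def by auto
  have A: "assoc \<eta> (T x, x) (graph_edge T x) (P x) (graph_edge T (x + 1)) (P (x + 1))"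
    and A': "assoc \<eta> (T x, x) (graph_edge T' x) (P' x) (graph_edge T' (x + 1)) (P' (x + 1))"
    if "u \<le> x" "x \<le> v" for x
  proof -
    have "x1 < x" "x < x2" using uv that by auto
    then show "assoc \<eta> (T x, x) (graph_edge T x) (P x) (graph_edge T (x + 1)) (P (x + 1))"
      and "assoc \<eta> (T x, x) (graph_edge T' x) (P' x) (graph_edge T' (x + 1)) (P' (x + 1))"
      using S S' shared[OF that] unfolding strand_def by auto
  qed
  have "P u \<le> \<eta> (e_sw (T u, u))" "0 < P' u"
    using A[of u] A'[of u] edges_u uv unfolding assoc_def by auto
  then have "in_pos \<eta> (T u, u) (graph_edge T u) (P u)
             < in_pos \<eta> (T u, u) (graph_edge T' u) (P' u)"
    using in_pos_sw_below_se edges_u by simp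
  then have "out_pos \<eta> (T v, v) (graph_edge T (v + 1)) (P (v + 1))
             < out_pos \<eta> (T v, v) (graph_edge T' (v + 1)) (P' (v + 1))"
    using order_along_shared_segment[of \<eta> T P u v T' P'] uv shared
      strand_restrict[OF S, of "u - 1" "v + 1"] strand_restrict[OF S', of "u - 1" "v + 1"]
    by simp
  moreover have "P' (v + 1) \<le> \<eta> (e_nw (T v, v))" "0 < P (v + 1)"
    using A[of v] A'[of v] edges_v uv unfolding assoc_def by auto
  then have "out_pos \<eta> (T v, v) (graph_edge T' (v + 1)) (P' (v + 1))
             < out_pos \<eta> (T v, v) (graph_edge T (v + 1)) (P (v + 1))"
    using out_pos_nw_below_ne edges_v by simp
  ultimately show False by simp
qed

section \<open>Broken traces as strands\<close>

lemma broken_trace_snd: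
  assumes "broken_trace l" "k < length l"
  shows "snd (l ! k) = snd (hd l) + int k"
  using assms(2)
proof (induction k)
  case 0
  then show ?case using assms(1) by (auto simp: broken_trace_def hd_conv_nth)
next
  case (Suc k)
  then show ?case using assms(1) unfolding broken_trace_def by auto
qed

lemma broken_trace_nth:
  assumes "broken_trace l" "x \<in> {snd (hd l) .. snd (hd l) + int (length l) - 1}"
  shows "nat (x - snd (hd l)) < length l" "l ! nat (x - snd (hd l)) = (t_at l x, x)"
proof -
  show "nat (x - snd (hd l)) < length l" using assms(2) by auto
  then show "l ! nat (x - snd (hd l)) = (t_at l x, x)"
    using broken_trace_snd[OF assms(1)] assms(2) unfolding t_at_def by (simp add: prod_eq_iff)
qed

lemma broken_trace_dom:
  assumes "broken_trace l"
  shows "dom_tr l = {snd (hd l) .. snd (hd l) + int (length l) - 1}"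
proof
  show "dom_tr l \<subseteq> {snd (hd l) .. snd (hd l) + int (length l) - 1}"
    using broken_trace_snd[OF assms] unfolding dom_tr_def by (force simp: in_set_conv_nth)
  show "{snd (hd l) .. snd (hd l) + int (length l) - 1} \<subseteq> dom_tr l"
  proof
    fix x assume x: "x \<in> {snd (hd l) .. snd (hd l) + int (length l) - 1}"
    have "l ! nat (x - snd (hd l)) \<in> set l" using broken_trace_nth(1)[OF assms x] by simp
    then show "x \<in> dom_tr l" unfolding dom_tr_def using broken_trace_nth(2)[OF assms x] by force
  qed
qed

text \<open>Positive weight provides at least one chain of associated points, so
  a broken trace of positive weight carries a strand over its domain.\<close>
lemma broken_trace_strand:
  assumes bt: "broken_trace l" and inside: "trace_in l S" and flow: "flow_field S \<eta>"
    and w: "weight \<eta> l > 0"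
  defines "x0 \<equiv> snd (hd l)"
  shows "\<exists>P. strand \<eta> (t_at l) P x0 (x0 + int (length l) - 1)"
proof -
  let ?chains = "{q. 0 < q \<and> q \<le> \<eta> (tr_edge l 1) \<and>
         (\<exists>p :: nat \<Rightarrow> real. p 1 = q \<and>
            (\<forall>i\<in>{2..length l - 1}. 0 < p i \<and> p i \<le> \<eta> (tr_edge l i) \<and>
               assoc \<eta> (l ! (i - 1)) (tr_edge l (i - 1)) (p (i - 1)) (tr_edge l i) (p i)))}"
  have "?chains \<noteq> {}" using w unfolding weight_def by (metis less_irrefl measure_empty)
  then obtain p :: "nat \<Rightarrow> real" where p: "\<And>i. i \<in> {2..length l - 1} \<Longrightarrow>
      assoc \<eta> (l ! (i - 1)) (tr_edge l (i - 1)) (p (i - 1)) (tr_edge l i) (p i)"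
    by blast
  define hi where "hi = x0 + int (length l) - 1"
  have vertex: "l ! nat (x - x0) = (t_at l x, x)" "nat (x - x0) < length l"
    if "x0 \<le> x" "x \<le> hi" for x
    using broken_trace_nth[OF bt, of x] that unfolding x0_def hi_def by auto
  have steps: "\<bar>t_at l (x + 1) - t_at l x\<bar> = 1" if "x0 \<le> x" "x < hi" for x
  proof -
    have "nat (x + 1 - x0) = nat (x - x0) + 1" using that by auto
    moreover have "\<bar>fst (l ! (nat (x - x0) + 1)) - fst (l ! nat (x - x0))\<bar> = 1"
      using bt vertex(2)[of "x + 1"] that unfolding broken_trace_def by auto
    ultimately show ?thesis using vertex[of x] vertex[of "x + 1"] that by auto
  qed
  have parity: "even (t_at l x + x)" if "x0 \<le> x" "x \<le> hi" for x
  proof -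
    have "l ! nat (x - x0) \<in> lattice" using bt nth_mem[OF vertex(2)[OF that]]
      unfolding broken_trace_def by auto
    then show ?thesis using vertex(1)[OF that] unfolding lattice_def by auto
  qed
  have interior: "conserves \<eta> (t_at l x, x) \<and> assoc \<eta> (t_at l x, x)
      (graph_edge (t_at l) x) (p (nat (x - x0))) (graph_edge (t_at l) (x + 1)) (p (nat (x + 1 - x0)))"
    if "x0 < x" "x < hi" for x
  proof -
    define j where "j = nat (x - x0)"
    have j: "0 < j" "j + 1 < length l" "nat (x + 1 - x0) = Suc j" "nat (x - 1 - x0) = j - 1"
      using that unfolding j_def hi_def by auto
    have vj: "l ! (j - 1) = (t_at l (x - 1), x - 1)" "l ! j = (t_at l x, x)"
        "l ! Suc j = (t_at l (x + 1), x + 1)"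
      using vertex[of "x - 1"] vertex[of x] vertex[of "x + 1"] that j unfolding j_def by auto
    have "l ! j \<in> S" using inside j unfolding trace_in_def by auto
    then have "conserves \<eta> (l ! j)" using flow unfolding flow_field_def conserves_def by auto
    moreover have "assoc \<eta> (l ! j) (tr_edge l j) (p j) (tr_edge l (Suc j)) (p (Suc j))"
      using p[of "Suc j"] j by auto
    moreover have "tr_edge l j = graph_edge (t_at l) x" "tr_edge l (Suc j) = graph_edge (t_at l) (x + 1)"
      using vj unfolding tr_edge_def graph_edge_def by auto
    ultimately show ?thesis using vj j unfolding j_def by simp
  qed
  have "strand \<eta> (t_at l) (\<lambda>x. p (nat (x - x0))) x0 hi"
    unfolding strand_def using steps parity interior by simp
  then show ?thesis unfolding hi_def by blast
qed

lemma incomparable_traces_cross: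
  assumes "dom_tr l \<noteq> {}" "dom_tr l' \<noteq> {}" "\<not> trace_ge l l'" "\<not> trace_ge l' l"
  obtains x1 x2 where "x1 \<in> dom_tr l \<inter> dom_tr l'" "t_at l x1 < t_at l' x1"
    and "x2 \<in> dom_tr l \<inter> dom_tr l'" "t_at l' x2 < t_at l x2"
proof -
  have "\<exists>x\<in>dom_tr l \<inter> dom_tr l'. t_at l x < t_at l' x"
  proof (rule ccontr)
    assume "\<not> ?thesis"
    then have le: "\<forall>x\<in>dom_tr l \<inter> dom_tr l'. t_at l' x \<le> t_at l x" by (simp add: not_less)
    then have "\<forall>x\<in>dom_tr l. \<forall>x'\<in>dom_tr l'. t_at l x < t_at l' x'"
      using assms(3) unfolding trace_ge_def by (auto simp: not_le)
    then show False using assms le unfolding trace_ge_def by fastforce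
  qed
  moreover have "\<exists>x\<in>dom_tr l \<inter> dom_tr l'. t_at l' x < t_at l x"
  proof (rule ccontr)
    assume "\<not> ?thesis"
    then have "\<forall>x\<in>dom_tr l \<inter> dom_tr l'. t_at l x \<le> t_at l' x" by (simp add: not_less)
    then show False using assms(4) calculation unfolding trace_ge_def by fastforce
  qed
  ultimately show ?thesis using that by blast
qed

theorem mainTheorem8:
  fixes a b c d :: int and \<eta> :: "edge \<Rightarrow> real" and l l' :: "pt list"
  assumes "even a" "even b" "even c" "even d" "a \<le> b" "c \<le> d"
    and "flow_field (rect a b c d) \<eta>"
    and "broken_trace l" "broken_trace l'"
    and "trace_in l (rect a b c d)" "trace_in l' (rect a b c d)"
    and "weight \<eta> l > 0" "weight \<eta> l' > 0"
  shows "trace_ge l l' \<or> trace_ge l' l"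
proof (rule ccontr)
  assume "\<not> (trace_ge l l' \<or> trace_ge l' l)"
  then have incomparable: "\<not> trace_ge l l'" "\<not> trace_ge l' l" by auto
  have dom: "dom_tr l = {snd (hd l) .. snd (hd l) + int (length l) - 1}"
    "dom_tr l' = {snd (hd l') .. snd (hd l') + int (length l') - 1}"
    using broken_trace_dom assms(8,9) by auto
  have "dom_tr l \<noteq> {}" "dom_tr l' \<noteq> {}"
    using dom assms(8,9) unfolding broken_trace_def by auto
  then obtain x1 x2 where x1: "x1 \<in> dom_tr l \<inter> dom_tr l'" "t_at l x1 < t_at l' x1"
    and x2: "x2 \<in> dom_tr l \<inter> dom_tr l'" "t_at l' x2 < t_at l x2"
    using incomparable_traces_cross incomparable by blast
  obtain P P' where P: "strand \<eta> (t_at l) P (snd (hd l)) (snd (hd l) + int (length l) - 1)"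
    and P': "strand \<eta> (t_at l') P' (snd (hd l')) (snd (hd l') + int (length l') - 1)"
    using broken_trace_strand[OF assms(8,10,7,12)] broken_trace_strand[OF assms(9,11,7,13)]
    by blast
  have "snd (hd l) \<le> min x1 x2" "max x1 x2 \<le> snd (hd l) + int (length l) - 1"
    "snd (hd l') \<le> min x1 x2" "max x1 x2 \<le> snd (hd l') + int (length l') - 1"
    using x1(1) x2(1) dom by auto
  then have strands: "strand \<eta> (t_at l) P (min x1 x2) (max x1 x2)"
    "strand \<eta> (t_at l') P' (min x1 x2) (max x1 x2)"
    using strand_restrict P P' by blast+
  consider "x1 < x2" | "x2 < x1" using x1(2) x2(2) by fastforce
  then show False
  proof cases
    case 1
    then show False
      using strands_do_not_cross[of \<eta> "t_at l" P x1 x2 "t_at l'" P'] strands x1 x2 by simp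
  next
    case 2
    then show False
      using strands_do_not_cross[of \<eta> "t_at l'" P' x2 x1 "t_at l" P] strands x1 x2 by simp
  qed
qed

end
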